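(* Let $A=B\wr_Q\mathcal{H}(d)$ be a quantum wreath product whose parameters $Q=(R,S,\rho,\sigma)$ satisfy: $\sigma$ is the flip $a\otimes b\mapsto b\otimes a$, $\rho=0$, and Conditions (C1)–(C9) hold. Let $V_B$ be a right $B$-module with $K$-basis $\{v_i\}_{i\in I}$, $I$ totally ordered, let $V_B^{\otimes d}$ be a right $B^{\otimes d}$-module via the factorwise action, let $\mu\in I^d$ with $\mu_1<\cdots<\mu_d$, and let $W$ be the $B^{\otimes d}$-submodule of $V_B^{\otimes d}$ generated by $\{v_{\mu\cdot g}\mid g\in\Sigma_d\}$. Consider the rule, for $\nu\in\{\mu\cdot g\mid g\in\Sigma_d\}$ and $1\le i\le d-1$: $v_\nu.H_i=v_{\nu\cdot s_i}$ if $\nu_i<\nu_{i+1}$, and $v_\nu.H_i=v_{\nu\cdot s_i}.R_i+v_\nu.S_i$ if $\nu_i>\nu_{i+1}$. (a) If $B$ acts on $V_B$ through a counit $\epsilon:B\to K$ (i.e. $v.b=\epsilon(b)v$), and there is $r\in K$ with $r^2=\epsilon(S)r+\epsilon(R)$, then this rule, together with the action of $B^{\otimes d}$, extends to a right $A$-module structure on $W$. (b) If $S=0$ and $R=1\otimes1$, then this rule, together with the action of $B^{\otimes d}$, extends to a right $A$-module structure on $W$.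
   Context: $K$ commutative ring, $B$ associative unital $K$-algebra free over $K$, $d\ge2$, tensor products over $K$. For $Z\in B\otimes B$, $Z_i:=1^{\otimes(i-1)}\otimes Z\otimes1^{\otimes(d-i-1)}$; $\phi_i$ applies $\phi\in\operatorname{End}_K(B\otimes B)$ to tensor factors $i,i+1$. $B\wr_Q\mathcal{H}(d)$: $K$-algebra generated by the algebra $B^{\otimes d}$ and $H_1,\dots,H_{d-1}$ with $H_kH_{k+1}H_k=H_{k+1}H_kH_{k+1}$, $H_iH_j=H_jH_i$ ($|i-j|\ge2$), $H_i^2=S_iH_i+R_i$, $H_ib=\sigma_i(b)H_i+\rho_i(b)$. With $\sigma$ the flip and $\rho=0$, Conditions (C1)–(C9) amount to (and are implied by) $\sigma(R)=R$, $(\sigma(S)-S)R=0$, and $Sx=\sigma(x)S$... more precisely they are: (C1) $\sigma(1\otimes1)=1\otimes1$; (C2) $\sigma$ multiplicative; (C3) $\sigma(S)S+\sigma(R)=S^2+R$, $\sigma(S)R=SR$; (C4) $\sigma^2(a)S=S\sigma(a)$ and $\sigma^2(a)R=Ra$ for all $a\in B\otimes B$; (C5) $\sigma_1\sigma_2\sigma_1=\sigma_2\sigma_1\sigma_2$ on $B^{\otimes3}$; (C8) $S_i=\sigma_j\sigma_i(S_j)$, $R_i=\sigma_j\sigma_i(R_j)$ in $B^{\otimes3}$ for $\{i,j\}=\{1,2\}$ (the remaining conditions (C6),(C7),(C9) being trivial when $\rho=0$). $v_\nu:=v_{\nu_1}\otimes\cdots\otimes v_{\nu_d}$; $\Sigma_d$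 acts on $I^d$ by place permutations, $\nu\cdot s_i$ swapping entries $i,i+1$. For $X\in B\otimes B$, $\epsilon(X):=(\epsilon\otimes\epsilon)(X)$. *)

theory Defs
  imports "HOL-Combinatorics.Permutations"
begin

text \<open>Free K-modules are modelled as finitely supported coefficient functions
  on a basis type.  B is a free K-algebra with basis indexed by 'x, given by its
  structure constants m (m x y = e_x e_y) and its unit u.  The tensor power
  B^{\<otimes>n} is free with basis the lists of basis indices of length n; similarly
  V^{\<otimes>d} is free with basis I^d (lists of length d).\<close>

definition supp :: "('a \<Rightarrow> 'k::zero) \<Rightarrow> 'a set" where
  "supp p = {a. p a \<noteq> 0}"

definition fsupp :: "('a \<Rightarrow> 'k::zero) \<Rightarrow> bool" where
  "fsupp p \<longleftrightarrow> finite (supp p)"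

definition delta :: "'a \<Rightarrow> 'a \<Rightarrow> 'k::{zero,one}" where
  "delta a = (\<lambda>b. if b = a then 1 else 0)"

definition linext :: "('a \<Rightarrow> 'b \<Rightarrow> 'k::comm_ring_1) \<Rightarrow> ('a \<Rightarrow> 'k) \<Rightarrow> 'b \<Rightarrow> 'k" where
  "linext f p = (\<lambda>b. \<Sum>a\<in>supp p. p a * f a b)"

definition bilin :: "('a \<Rightarrow> 'c \<Rightarrow> 'b \<Rightarrow> 'k::comm_ring_1) \<Rightarrow> ('a \<Rightarrow> 'k) \<Rightarrow> ('c \<Rightarrow> 'k) \<Rightarrow> 'b \<Rightarrow> 'k" where
  "bilin f p q = (\<lambda>b. \<Sum>a\<in>supp p. \<Sum>c\<in>supp q. p a * q c * f a c b)"

definition free_algebra :: "('x \<Rightarrow> 'x \<Rightarrow> 'x \<Rightarrow> 'k::comm_ring_1) \<Rightarrow> ('x \<Rightarrow> 'k) \<Rightarrow> bool" where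
  "free_algebra m u \<longleftrightarrow> fsupp u \<and> (\<forall>x y. fsupp (m x y)) \<and>
     (\<forall>x y z. linext (\<lambda>w. m w z) (m x y) = linext (m x) (m y z)) \<and>
     (\<forall>x. linext (\<lambda>w. m w x) u = delta x \<and> linext (m x) u = delta x)"

text \<open>Right B-module V, free over K with basis 'i; va i x = v_i . e_x.\<close>
definition right_module :: "('x \<Rightarrow> 'x \<Rightarrow> 'x \<Rightarrow> 'k::comm_ring_1) \<Rightarrow> ('x \<Rightarrow> 'k) \<Rightarrow>
    ('i \<Rightarrow> 'x \<Rightarrow> 'i \<Rightarrow> 'k) \<Rightarrow> bool" where
  "right_module m u va \<longleftrightarrow> (\<forall>i x. fsupp (va i x)) \<and>
     (\<forall>i. linext (va i) u = delta i) \<and>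
     (\<forall>i x y. linext (\<lambda>j. va j y) (va i x) = linext (va i) (m x y))"

definition tens :: "('x \<Rightarrow> 'k::comm_ring_1) list \<Rightarrow> 'x list \<Rightarrow> 'k" where
  "tens vs = (\<lambda>xs. if length xs = length vs then (\<Prod>k<length vs. (vs ! k) (xs ! k)) else 0)"

definition tpow :: "nat \<Rightarrow> ('x list \<Rightarrow> 'k::zero) set" where
  "tpow n = {p. fsupp p \<and> (\<forall>xs. p xs \<noteq> 0 \<longrightarrow> length xs = n)}"

definition tmul :: "('x \<Rightarrow> 'x \<Rightarrow> 'x \<Rightarrow> 'k::comm_ring_1) \<Rightarrow> ('x list \<Rightarrow> 'k) \<Rightarrow> ('x list \<Rightarrow> 'k) \<Rightarrow> 'x list \<Rightarrow> 'k" where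
  "tmul m p q = bilin (\<lambda>xs ys. tens (map2 m xs ys)) p q"

definition tone :: "('x \<Rightarrow> 'k::comm_ring_1) \<Rightarrow> nat \<Rightarrow> 'x list \<Rightarrow> 'k" where
  "tone u n = tens (replicate n u)"

text \<open>Swap of entries i and i+1 (1-based) of a list: the place permutation by s_i.\<close>
definition swp :: "nat \<Rightarrow> 'a list \<Rightarrow> 'a list" where
  "swp i xs = xs[i - 1 := xs ! i, i := xs ! (i - 1)]"

text \<open>sigma_i for sigma the flip: swap tensor factors i and i+1.\<close>
definition sig :: "nat \<Rightarrow> ('a list \<Rightarrow> 'k) \<Rightarrow> 'a list \<Rightarrow> 'k" where
  "sig i p = (\<lambda>xs. p (swp i xs))"

text \<open>Z_i = 1^{\<otimes>(i-1)} \<otimes> Z \<otimes> 1^{\<otimes>(d-i-1)} in B^{\<otimes>d}, for Z in B \<otimes> B.\<close>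
definition emb :: "('x \<Rightarrow> 'k::comm_ring_1) \<Rightarrow> nat \<Rightarrow> nat \<Rightarrow> ('x list \<Rightarrow> 'k) \<Rightarrow> 'x list \<Rightarrow> 'k" where
  "emb u d i Z = (\<lambda>xs. if length xs = d
       then (\<Prod>k\<in>{..<d} - {i - 1, i}. u (xs ! k)) * Z [xs ! (i - 1), xs ! i] else 0)"

definition eps2 :: "('x \<Rightarrow> 'k::comm_ring_1) \<Rightarrow> ('x list \<Rightarrow> 'k) \<Rightarrow> 'k" where
  "eps2 \<epsilon> X = (\<Sum>xs\<in>supp X. X xs * \<epsilon> (xs ! 0) * \<epsilon> (xs ! 1))"

definition alg_hom_to_K :: "('x \<Rightarrow> 'x \<Rightarrow> 'x \<Rightarrow> 'k::comm_ring_1) \<Rightarrow> ('x \<Rightarrow> 'k) \<Rightarrow> ('x \<Rightarrow> 'k) \<Rightarrow> bool" where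
  "alg_hom_to_K m u \<epsilon> \<longleftrightarrow> (\<Sum>w\<in>supp u. u w * \<epsilon> w) = 1 \<and>
     (\<forall>x y. (\<Sum>w\<in>supp (m x y). m x y w * \<epsilon> w) = \<epsilon> x * \<epsilon> y)"

definition tact :: "('i \<Rightarrow> 'x \<Rightarrow> 'i \<Rightarrow> 'k::comm_ring_1) \<Rightarrow> ('i list \<Rightarrow> 'k) \<Rightarrow> ('x list \<Rightarrow> 'k) \<Rightarrow> 'i list \<Rightarrow> 'k" where
  "tact va w b = bilin (\<lambda>\<nu> xs. tens (map2 va \<nu> xs)) w b"

text \<open>Conditions (C1)-(C9) for Q = (R,S,0,flip).  (C1),(C2),(C5) hold automatically
  for the flip and (C6),(C7),(C9) are trivial for rho = 0.\<close>
definition qwp_flip_conditions :: "('x \<Rightarrow> 'x \<Rightarrow> 'x \<Rightarrow> 'k::comm_ring_1) \<Rightarrow> ('x \<Rightarrow> 'k) \<Rightarrow>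
    ('x list \<Rightarrow> 'k) \<Rightarrow> ('x list \<Rightarrow> 'k) \<Rightarrow> bool" where
  "qwp_flip_conditions m u S R \<longleftrightarrow> S \<in> tpow 2 \<and> R \<in> tpow 2 \<and>
     \<comment> \<open>(C3)\<close>
     (\<lambda>xs. tmul m (sig 1 S) S xs + sig 1 R xs) = (\<lambda>xs. tmul m S S xs + R xs) \<and>
     tmul m (sig 1 S) R = tmul m S R \<and>
     \<comment> \<open>(C4)\<close>
     (\<forall>a\<in>tpow 2. tmul m (sig 1 (sig 1 a)) S = tmul m S (sig 1 a) \<and>
                 tmul m (sig 1 (sig 1 a)) R = tmul m R a) \<and>
     \<comment> \<open>(C8)\<close>
     emb u 3 1 S = sig 2 (sig 1 (emb u 3 2 S)) \<and> emb u 3 2 S = sig 1 (sig 2 (emb u 3 1 S)) \<and>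
     emb u 3 1 R = sig 2 (sig 1 (emb u 3 2 R)) \<and> emb u 3 2 R = sig 1 (sig 2 (emb u 3 1 R))"

definition orbit :: "nat \<Rightarrow> 'i list \<Rightarrow> 'i list set" where
  "orbit d \<mu> = {map (\<lambda>k. \<mu> ! g k) [0..<d] | g. g permutes {..<d}}"

definition Wsub :: "('i \<Rightarrow> 'x \<Rightarrow> 'i \<Rightarrow> 'k::comm_ring_1) \<Rightarrow> nat \<Rightarrow> 'i list \<Rightarrow> ('i list \<Rightarrow> 'k) set" where
  "Wsub va d \<mu> = {(\<lambda>\<rho>. \<Sum>\<nu>\<in>orbit d \<mu>. tact va (delta \<nu>) (p \<nu>) \<rho>) | p. \<forall>\<nu>. p \<nu> \<in> tpow d}"

text \<open>Operators h_i (the action of H_i) on W, which together with the given action of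
  B^{\<otimes>d} define a right module over the algebra B \<wr>_Q H(d) presented by generators
  B^{\<otimes>d}, H_1..H_{d-1} and its defining relations (for sigma the flip, rho = 0).\<close>
definition qwp_module_on :: "('x \<Rightarrow> 'k::comm_ring_1) \<Rightarrow> ('i \<Rightarrow> 'x \<Rightarrow> 'i \<Rightarrow> 'k) \<Rightarrow> nat \<Rightarrow>
    ('x list \<Rightarrow> 'k) \<Rightarrow> ('x list \<Rightarrow> 'k) \<Rightarrow> ('i list \<Rightarrow> 'k) set \<Rightarrow>
    (nat \<Rightarrow> ('i list \<Rightarrow> 'k) \<Rightarrow> 'i list \<Rightarrow> 'k) \<Rightarrow> bool" where
  "qwp_module_on u va d S R W h \<longleftrightarrow>
     (\<forall>i\<in>{1..<d}. \<forall>w\<in>W. h i w \<in> W) \<and>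
     (\<forall>i\<in>{1..<d}. \<forall>w\<in>W. \<forall>w'\<in>W. h i (\<lambda>\<nu>. w \<nu> + w' \<nu>) = (\<lambda>\<nu>. h i w \<nu> + h i w' \<nu>)) \<and>
     (\<forall>i\<in>{1..<d}. \<forall>w\<in>W. \<forall>c. h i (\<lambda>\<nu>. c * w \<nu>) = (\<lambda>\<nu>. c * h i w \<nu>)) \<and>
     \<comment> \<open>H_i b = \<sigma>_i(b) H_i\<close>
     (\<forall>i\<in>{1..<d}. \<forall>w\<in>W. \<forall>b\<in>tpow d. tact va (h i w) b = h i (tact va w (sig i b))) \<and>
     \<comment> \<open>H_i^2 = S_i H_i + R_i\<close>
     (\<forall>i\<in>{1..<d}. \<forall>w\<in>W. h i (h i w) =
        (\<lambda>\<nu>. h i (tact va w (emb u d i S)) \<nu> + tact va w (emb u d i R) \<nu>)) \<and>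
     \<comment> \<open>braid relations\<close>
     (\<forall>k. 1 \<le> k \<and> k + 1 < d \<longrightarrow>
        (\<forall>w\<in>W. h k (h (k + 1) (h k w)) = h (k + 1) (h k (h (k + 1) w)))) \<and>
     \<comment> \<open>far commutation\<close>
     (\<forall>i\<in>{1..<d}. \<forall>j\<in>{1..<d}. (i + 2 \<le> j \<or> j + 2 \<le> i) \<longrightarrow>
        (\<forall>w\<in>W. h i (h j w) = h j (h i w)))"

definition qwp_rule :: "('x \<Rightarrow> 'k::comm_ring_1) \<Rightarrow> ('i::linorder \<Rightarrow> 'x \<Rightarrow> 'i \<Rightarrow> 'k) \<Rightarrow> nat \<Rightarrow> 'i list \<Rightarrow>
    ('x list \<Rightarrow> 'k) \<Rightarrow> ('x list \<Rightarrow> 'k) \<Rightarrow> (nat \<Rightarrow> ('i list \<Rightarrow> 'k) \<Rightarrow> 'i list \<Rightarrow> 'k) \<Rightarrow> bool" where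
  "qwp_rule u va d \<mu> S R h \<longleftrightarrow>
     (\<forall>i\<in>{1..<d}. \<forall>\<nu>\<in>orbit d \<mu>.
        (\<nu> ! (i - 1) < \<nu> ! i \<longrightarrow> h i (delta \<nu>) = delta (swp i \<nu>)) \<and>
        (\<nu> ! i < \<nu> ! (i - 1) \<longrightarrow> h i (delta \<nu>) =
           (\<lambda>\<rho>. tact va (delta (swp i \<nu>)) (emb u d i R) \<rho> + tact va (delta \<nu>) (emb u d i S) \<rho>)))"

definition extends_to_qwp_module where
  "extends_to_qwp_module u va d \<mu> S R \<longleftrightarrow>
     (\<exists>h. qwp_module_on u va d S R (Wsub va d \<mu>) h \<and> qwp_rule u va d \<mu> S R h)"

end

theory Submission
  imports Defs
begin

text \<open>Both parts are proved by writing down the action of the \<open>H\<^sub>i\<close> on coefficient functions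
  and checking the defining relations directly.

  In case (b) \<open>H\<^sub>i\<close> acts by the place permutation \<open>\<sigma>\<^sub>i\<close> itself: \<open>H\<^sub>i b = \<sigma>\<^sub>i(b) H\<^sub>i\<close> is the
  equivariance of the factorwise action, \<open>H\<^sub>i\<^sup>2 = R\<^sub>i = 1\<close>, the braid and commutation relations
  are those of the symmetric group, and \<open>W\<close> is stable because \<open>\<sigma>\<^sub>i\<close> permutes the orbit of \<open>\<mu>\<close>.

  In case (a) every \<open>b \<in> B\<^sup>\<otimes>\<^sup>d\<close> acts on \<open>V\<^sup>\<otimes>\<^sup>d\<close> by the scalar \<open>\<epsilon>\<^sup>\<otimes>\<^sup>d(b)\<close>. The orbit of \<open>\<mu>\<close>
  consists of lists with distinct entries, and with \<open>s = \<epsilon>\<^sup>\<otimes>\<^sup>d(S\<^sub>i)\<close>, \<open>r = \<epsilon>\<^sup>\<otimes>\<^sup>d(R\<^sub>i)\<close> (which do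
  not depend on \<open>i\<close>) the rule is the regular representation of the generic Hecke algebra with
  \<open>T\<^sub>i\<^sup>2 = s T\<^sub>i + r\<close> on the span of these \<open>v\<^sub>\<nu>\<close>, and it preserves \<open>W\<close>. Its relations are checked on each basis vector by comparing the relative
  order of the two or three entries involved.\<close>

subsection \<open>Place permutations\<close>

lemma length_swp [simp]: "length (swp i xs) = length xs"
  by (simp add: swp_def)

lemma nth_swp:
  assumes "1 \<le> i" "i < length xs" "j < length xs"
  shows "swp i xs ! j = (if j = i - 1 then xs ! i else if j = i then xs ! (i - 1) else xs ! j)"
  using assms by (auto simp: swp_def nth_list_update)

lemma nth_swp_transpose:
  assumes "1 \<le> i" "i < length xs" "j < length xs"
  shows "swp i xs ! j = xs ! transpose (i - 1) i j"
  using assms by (auto simp: nth_swp transpose_def)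

lemma swp_swp [simp]:
  assumes "1 \<le> i" "i < length xs"
  shows "swp i (swp i xs) = xs"
  using assms by (intro nth_equalityI) (auto simp: nth_swp)

lemma swp_eq_iff:
  assumes "1 \<le> i" "i < length \<nu>"
  shows "swp i \<rho> = \<nu> \<longleftrightarrow> \<rho> = swp i \<nu>"
  using assms swp_swp by (metis length_swp)

lemma swp_braid:
  assumes "1 \<le> k" "k + 1 < length xs"
  shows "swp k (swp (k + 1) (swp k xs)) = swp (k + 1) (swp k (swp (k + 1) xs))"
  using assms by (intro nth_equalityI) (auto simp: nth_swp)

lemma swp_commute:
  assumes "1 \<le> i" "i < length xs" "1 \<le> j" "j < length xs" "i + 2 \<le> j \<or> j + 2 \<le> i"
  shows "swp i (swp j xs) = swp j (swp i xs)"
  using assms by (intro nth_equalityI) (auto simp: nth_swp)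

lemma prod_swp:
  assumes "1 \<le> i" "i < d" "length xs = d"
  shows "(\<Prod>k<d. f k (swp i xs ! k)) = (\<Prod>k<d. f (transpose (i - 1) i k) (xs ! k))"
proof -
  let ?\<tau> = "transpose (i - 1) i"
  have \<tau>: "?\<tau> permutes {..<d}"
    using assms by (intro permutes_swap_id) auto
  have "(\<Prod>k<d. f k (swp i xs ! k)) = (\<Prod>k<d. f (?\<tau> (?\<tau> k)) (xs ! ?\<tau> k))"
    using assms by (intro prod.cong) (auto simp: nth_swp_transpose)
  also have "\<dots> = (\<Prod>k<d. f (?\<tau> k) (xs ! k))"
    using prod.permute[OF \<tau>, of "\<lambda>k. f (?\<tau> k) (xs ! k)"] by (simp add: comp_def)
  finally show ?thesis .
qed

lemma orbit_eq_image: "orbit d \<mu> = (\<lambda>g. map (\<lambda>k. \<mu> ! g k) [0..<d]) ` {g. g permutes {..<d}}"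
  unfolding orbit_def by blast

lemma orbitE:
  assumes "\<nu> \<in> orbit d \<mu>"
  obtains g where "g permutes {..<d}" "\<nu> = map (\<lambda>k. \<mu> ! g k) [0..<d]"
  using assms unfolding orbit_eq_image by blast

lemma finite_orbit: "finite (orbit d \<mu>)"
  unfolding orbit_eq_image by (intro finite_imageI finite_permutations) simp

lemma length_orbit: "\<nu> \<in> orbit d \<mu> \<Longrightarrow> length \<nu> = d"
  by (auto simp: orbit_def)

lemma distinct_orbit:
  assumes "\<nu> \<in> orbit d \<mu>" "length \<mu> = d" "distinct \<mu>"
  shows "distinct \<nu>"
proof -
  obtain g where g: "g permutes {..<d}" "\<nu> = map (\<lambda>k. \<mu> ! g k) [0..<d]"
    using assms(1) by (rule orbitE)
  have inj: "inj_on g {..<d}"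
    using g(1) by (rule permutes_inj_on)
  have range: "g k < d" if "k < d" for k
    using g(1) that permutes_in_image by fastforce
  show ?thesis
    unfolding distinct_conv_nth
  proof (intro allI impI)
    fix i j assume "i < length \<nu>" "j < length \<nu>" "i \<noteq> j"
    then show "\<nu> ! i \<noteq> \<nu> ! j"
      using g(2) range inj assms(2,3) by (simp add: nth_eq_iff_index_eq inj_on_eq_iff)
  qed
qed

lemma swp_in_orbit:
  assumes "\<nu> \<in> orbit d \<mu>" "1 \<le> i" "i < d"
  shows "swp i \<nu> \<in> orbit d \<mu>"
proof -
  obtain g where g: "g permutes {..<d}" "\<nu> = map (\<lambda>k. \<mu> ! g k) [0..<d]"
    using assms(1) by (rule orbitE)
  let ?\<tau> = "transpose (i - 1) i"
  have "g \<circ> ?\<tau> permutes {..<d}"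
    using assms by (intro permutes_compose[OF _ g(1)] permutes_swap_id) auto
  moreover have "?\<tau> k < d" if "k < d" for k
    using that assms by (auto simp: transpose_def)
  then have "swp i \<nu> = map (\<lambda>k. \<mu> ! (g \<circ> ?\<tau>) k) [0..<d]"
    using assms g(2) by (intro nth_equalityI) (auto simp: nth_swp_transpose)
  ultimately show ?thesis
    unfolding orbit_eq_image by blast
qed

lemma swp_in_orbit_iff:
  assumes "1 \<le> i" "i < d"
  shows "swp i \<nu> \<in> orbit d \<mu> \<longleftrightarrow> \<nu> \<in> orbit d \<mu>"
proof
  assume "swp i \<nu> \<in> orbit d \<mu>"
  then have "swp i (swp i \<nu>) \<in> orbit d \<mu>" "length (swp i \<nu>) = d"
    using assms swp_in_orbit length_orbit by blast+
  then show "\<nu> \<in> orbit d \<mu>"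
    using assms by simp
qed (use assms swp_in_orbit in blast)

lemma swp_image_orbit:
  assumes "1 \<le> i" "i < d"
  shows "swp i ` orbit d \<mu> = orbit d \<mu>"
proof
  show "swp i ` orbit d \<mu> \<subseteq> orbit d \<mu>"
    using assms swp_in_orbit by blast
  show "orbit d \<mu> \<subseteq> swp i ` orbit d \<mu>"
  proof
    fix \<nu> assume "\<nu> \<in> orbit d \<mu>"
    then have "swp i \<nu> \<in> orbit d \<mu>" "swp i (swp i \<nu>) = \<nu>"
      using assms swp_in_orbit length_orbit[of \<nu>] by auto
    then show "\<nu> \<in> swp i ` orbit d \<mu>"
      by (metis image_eqI)
  qed
qed

lemma inj_on_swp_orbit:
  assumes "1 \<le> i" "i < d"
  shows "inj_on (swp i) (orbit d \<mu>)"
proof (rule inj_on_inverseI[where g = "swp i"])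
  fix \<nu> assume "\<nu> \<in> orbit d \<mu>"
  then show "swp i (swp i \<nu>) = \<nu>"
    using assms length_orbit[of \<nu>] by simp
qed

lemma sum_lists_length_prod:
  fixes f :: "nat \<Rightarrow> 'a \<Rightarrow> 'k::comm_semiring_1"
  assumes "finite A"
  shows "(\<Sum>xs\<in>{xs. set xs \<subseteq> A \<and> length xs = n}. \<Prod>k<n. f k (xs ! k)) = (\<Prod>k<n. \<Sum>x\<in>A. f k x)"
proof (induct n arbitrary: f)
  case 0
  then show ?case by (simp cong: conj_cong)
next
  case (Suc n)
  let ?L = "{xs. set xs \<subseteq> A \<and> length xs = n}"
  have L: "{xs. set xs \<subseteq> A \<and> length xs = Suc n} = (\<lambda>(xs, x). x # xs) ` (?L \<times> A)"
    by (auto simp: image_iff length_Suc_conv)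
  have inj: "inj_on (\<lambda>(xs, x). x # xs) (?L \<times> A)"
    by (auto simp: inj_on_def)
  have "(\<Sum>xs\<in>{xs. set xs \<subseteq> A \<and> length xs = Suc n}. \<Prod>k<Suc n. f k (xs ! k))
      = (\<Sum>(xs, x)\<in>?L \<times> A. f 0 x * (\<Prod>k<n. f (Suc k) (xs ! k)))"
    unfolding L by (subst sum.reindex[OF inj])
      (simp add: prod.lessThan_Suc_shift split_def del: prod.lessThan_Suc)
  also have "\<dots> = (\<Sum>x\<in>A. f 0 x) * (\<Sum>xs\<in>?L. \<Prod>k<n. f (Suc k) (xs ! k))"
    by (simp add: sum_product sum.cartesian_product' sum.swap[of _ A] mult.commute)
  also have "\<dots> = (\<Prod>k<Suc n. \<Sum>x\<in>A. f k x)"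
    using Suc[of "\<lambda>k. f (Suc k)"] by (simp add: prod.lessThan_Suc_shift del: prod.lessThan_Suc)
  finally show ?case .
qed

lemma delta_apply: "delta a b = (if b = a then 1 else 0)"
  by (simp add: delta_def)

lemma supp_delta: "supp (delta \<nu>) \<subseteq> {\<nu>}"
  by (auto simp: supp_def delta_def)

lemma finite_supp_delta: "finite (supp (delta \<nu>))"
  using supp_delta finite_subset by fastforce

lemma length_supp_delta: "length \<nu> = d \<Longrightarrow> \<forall>x\<in>supp (delta \<nu>). length x = d"
  using supp_delta by fastforce

lemma prod_delta:
  assumes "length \<nu> = d" "length \<rho> = d"
  shows "(\<Prod>k<d. delta (\<nu> ! k) (\<rho> ! k) :: 'k::comm_ring_1) = delta \<nu> \<rho>"
proof (cases "\<nu> = \<rho>")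
  case False
  then obtain k where "k < d" "\<nu> ! k \<noteq> \<rho> ! k"
    using assms nth_equalityI by metis
  then show ?thesis
    using False by (auto simp: delta_def intro!: prod_zero bexI[of _ k])
qed (simp add: delta_def)

lemma tpow_length: "p \<in> tpow d \<Longrightarrow> \<forall>x\<in>supp p. length x = d"
  by (auto simp: tpow_def supp_def)

lemma finite_supp_tpow: "p \<in> tpow d \<Longrightarrow> finite (supp p)"
  by (auto simp: tpow_def fsupp_def)

lemma tpowI: "finite (supp p) \<Longrightarrow> \<forall>x\<in>supp p. length x = d \<Longrightarrow> p \<in> tpow d"
  by (auto simp: tpow_def fsupp_def supp_def)

lemma tpow_add:
  fixes p q :: "'x list \<Rightarrow> 'k::comm_ring_1"
  assumes "p \<in> tpow d" "q \<in> tpow d"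
  shows "(\<lambda>xs. p xs + q xs) \<in> tpow d"
proof -
  have "supp (\<lambda>xs. p xs + q xs) \<subseteq> supp p \<union> supp q"
    by (auto simp: supp_def)
  then show ?thesis
    using assms by (intro tpowI) (auto dest: tpow_length finite_supp_tpow intro: finite_subset)
qed

lemma tpow_scale:
  fixes p :: "'x list \<Rightarrow> 'k::comm_ring_1"
  assumes "p \<in> tpow d"
  shows "(\<lambda>xs. c * p xs) \<in> tpow d"
proof -
  have "supp (\<lambda>xs. c * p xs) \<subseteq> supp p"
    by (auto simp: supp_def)
  then show ?thesis
    using assms by (intro tpowI) (auto dest: tpow_length finite_supp_tpow intro: finite_subset)
qed

lemma tpow_zero: "(\<lambda>_. 0) \<in> tpow d"
  by (simp add: tpow_def fsupp_def supp_def)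

lemma tpow_sum:
  fixes f :: "'a \<Rightarrow> 'x list \<Rightarrow> 'k::comm_ring_1"
  assumes "finite A" "\<And>a. a \<in> A \<Longrightarrow> f a \<in> tpow d"
  shows "(\<lambda>xs. \<Sum>a\<in>A. f a xs) \<in> tpow d"
  using assms by (induction A rule: finite_induct) (simp_all add: tpow_zero tpow_add)

lemma delta_tpow: "length \<nu> = d \<Longrightarrow> delta \<nu> \<in> tpow d"
  by (intro tpowI finite_supp_delta length_supp_delta)

lemma length_supp_sig: "\<forall>x\<in>supp b. length x = d \<Longrightarrow> \<forall>x\<in>supp (sig i b). length x = d"
  by (auto simp: supp_def sig_def)

lemma supp_sig:
  assumes "\<forall>x\<in>supp p. length x = d" "1 \<le> i" "i < d"
  shows "supp (sig i p) = swp i ` supp p"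
proof
  show "supp (sig i p) \<subseteq> swp i ` supp p"
  proof
    fix x assume x: "x \<in> supp (sig i p)"
    then have "swp i x \<in> supp p"
      by (simp add: supp_def sig_def)
    moreover from this have "swp i (swp i x) = x"
      using assms by (metis length_swp swp_swp)
    ultimately show "x \<in> swp i ` supp p"
      by (metis image_eqI)
  qed
  show "swp i ` supp p \<subseteq> supp (sig i p)"
    using assms by (auto simp: supp_def sig_def)
qed

lemma inj_on_swp_supp:
  assumes "\<forall>x\<in>supp p. length x = d" "1 \<le> i" "i < d"
  shows "inj_on (swp i) (supp p)"
  by (rule inj_on_inverseI[where g = "swp i"]) (use assms in simp)

lemma sig_sig:
  assumes "\<forall>x\<in>supp b. length x = d" "1 \<le> i" "i < d"
  shows "sig i (sig i b) = b"
proof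
  fix xs
  show "sig i (sig i b) xs = b xs"
  proof (cases "length xs = d")
    case False
    then have "swp i (swp i xs) \<notin> supp b" "xs \<notin> supp b"
      using assms by auto
    then show ?thesis by (simp add: sig_def supp_def)
  qed (use assms in \<open>simp add: sig_def\<close>)
qed

lemma sig_braid:
  assumes "\<forall>x\<in>supp w. length x = d" "1 \<le> k" "k + 1 < d"
  shows "sig k (sig (k + 1) (sig k w)) = sig (k + 1) (sig k (sig (k + 1) w))"
proof
  fix \<rho>
  show "sig k (sig (k + 1) (sig k w)) \<rho> = sig (k + 1) (sig k (sig (k + 1) w)) \<rho>"
  proof (cases "length \<rho> = d")
    case False
    then have "swp k (swp (k + 1) (swp k \<rho>)) \<notin> supp w" "swp (k + 1) (swp k (swp (k + 1) \<rho>)) \<notin> supp w"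
      using assms(1) by auto
    then show ?thesis
      by (simp add: sig_def supp_def)
  qed (use assms swp_braid[of k \<rho>] in \<open>simp add: sig_def\<close>)
qed

lemma sig_commute:
  assumes "\<forall>x\<in>supp w. length x = d" "1 \<le> i" "i < d" "1 \<le> j" "j < d" "i + 2 \<le> j \<or> j + 2 \<le> i"
  shows "sig i (sig j w) = sig j (sig i w)"
proof
  fix \<rho>
  show "sig i (sig j w) \<rho> = sig j (sig i w) \<rho>"
  proof (cases "length \<rho> = d")
    case False
    then have "swp j (swp i \<rho>) \<notin> supp w" "swp i (swp j \<rho>) \<notin> supp w"
      using assms(1) by auto
    then show ?thesis
      by (simp add: sig_def supp_def)
  qed (use assms swp_commute[of i \<rho> j] in \<open>simp add: sig_def\<close>)
qed

lemma sig_tpow: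
  assumes "b \<in> tpow d" "1 \<le> i" "i < d"
  shows "sig i b \<in> tpow d"
proof (rule tpowI)
  have len: "\<forall>x\<in>supp b. length x = d"
    using assms(1) by (rule tpow_length)
  show "finite (supp (sig i b))"
    using supp_sig[OF len assms(2,3)] finite_supp_tpow[OF assms(1)] by simp
  show "\<forall>x\<in>supp (sig i b). length x = d"
    using len by (rule length_supp_sig)
qed

lemma sig_delta:
  assumes "length \<nu> = d" "1 \<le> i" "i < d"
  shows "sig i (delta \<nu>) = delta (swp i \<nu>)"
  using assms by (auto simp: sig_def delta_def swp_eq_iff)

lemma tens_map2:
  assumes "length \<nu> = d" "length xs = d"
  shows "tens (map2 va \<nu> xs) \<rho> = (if length \<rho> = d then \<Prod>k<d. va (\<nu> ! k) (xs ! k) (\<rho> ! k) else 0)"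
  using assms by (simp add: tens_def)

lemma tens_map2_swp:
  assumes "length \<nu> = d" "length xs = d" "1 \<le> i" "i < d"
  shows "tens (map2 va \<nu> xs) (swp i \<rho>) = tens (map2 va (swp i \<nu>) (swp i xs)) \<rho>"
proof (cases "length \<rho> = d")
  case True
  have "(\<Prod>k<d. va (\<nu> ! k) (xs ! k) (swp i \<rho> ! k)) = (\<Prod>k<d. va (swp i \<nu> ! k) (swp i xs ! k) (\<rho> ! k))"
    using assms True by (subst prod_swp) (auto intro!: prod.cong simp: nth_swp_transpose)
  then show ?thesis
    using assms True by (simp add: tens_map2)
qed (use assms in \<open>simp add: tens_map2\<close>)

text \<open>This is the relation \<open>H\<^sub>i b = \<sigma>\<^sub>i(b) H\<^sub>i\<close> when \<open>H\<^sub>i\<close> acts by the flip.\<close>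
lemma tact_swp:
  assumes "\<forall>x\<in>supp w. length x = d" "\<forall>x\<in>supp b. length x = d" "1 \<le> i" "i < d"
  shows "tact va w b (swp i \<rho>) = tact va (sig i w) (sig i b) \<rho>"
proof -
  have "tact va (sig i w) (sig i b) \<rho> =
      (\<Sum>a\<in>swp i ` supp w. \<Sum>c\<in>swp i ` supp b. w (swp i a) * b (swp i c) * tens (map2 va a c) \<rho>)"
    unfolding tact_def bilin_def supp_sig[OF assms(1,3,4)] supp_sig[OF assms(2,3,4)]
    by (simp add: sig_def)
  also have "\<dots> = (\<Sum>a\<in>supp w. \<Sum>c\<in>supp b.
      w (swp i (swp i a)) * b (swp i (swp i c)) * tens (map2 va (swp i a) (swp i c)) \<rho>)"
    by (simp add: sum.reindex[OF inj_on_swp_supp[OF assms(1,3,4)]]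
        sum.reindex[OF inj_on_swp_supp[OF assms(2,3,4)]])
  also have "\<dots> = tact va w b (swp i \<rho>)"
    using assms unfolding tact_def bilin_def by (intro sum.cong refl) (simp add: tens_map2_swp)
  finally show ?thesis by simp
qed

lemma tact_tpow:
  assumes va: "\<forall>i x. fsupp (va i x)" and w: "w \<in> tpow d" and b: "b \<in> tpow d"
  shows "tact va w b \<in> tpow d"
proof -
  define C where "C = (\<Union>\<nu>\<in>supp w. \<Union>xs\<in>supp b. \<Union>k<d. supp (va (\<nu> ! k) (xs ! k)))"
  have "finite C"
    unfolding C_def using finite_supp_tpow[OF w] finite_supp_tpow[OF b] va by (auto simp: fsupp_def)
  have "set \<rho> \<subseteq> C \<and> length \<rho> = d" if "\<rho> \<in> supp (tact va w b)" for \<rho>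
  proof -
    have "(\<Sum>\<nu>\<in>supp w. \<Sum>xs\<in>supp b. w \<nu> * b xs * tens (map2 va \<nu> xs) \<rho>) \<noteq> 0"
      using that by (simp add: supp_def tact_def bilin_def)
    then obtain \<nu> xs where \<nu>: "\<nu> \<in> supp w" and xs: "xs \<in> supp b"
      and "w \<nu> * b xs * tens (map2 va \<nu> xs) \<rho> \<noteq> 0"
      by (meson sum.not_neutral_contains_not_neutral)
    then have tens: "tens (map2 va \<nu> xs) \<rho> \<noteq> 0"
      by auto
    have len: "length \<nu> = d" "length xs = d"
      using \<nu> xs tpow_length w b by blast+
    then have "length \<rho> = d" "(\<Prod>k<d. va (\<nu> ! k) (xs ! k) (\<rho> ! k)) \<noteq> 0"
      using tens by (auto simp: tens_map2 split: if_splits)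
    then have "va (\<nu> ! k) (xs ! k) (\<rho> ! k) \<noteq> 0" if "k < d" for k
      using that by (auto intro: prod_zero)
    then have "\<rho> ! k \<in> C" if "k < d" for k
      using that \<nu> xs unfolding C_def supp_def by blast
    then show ?thesis
      using \<open>length \<rho> = d\<close> by (auto simp: in_set_conv_nth)
  qed
  then have "supp (tact va w b) \<subseteq> {\<rho>. set \<rho> \<subseteq> C \<and> length \<rho> = d}"
    by blast
  then show ?thesis
    using finite_lists_length_eq[OF \<open>finite C\<close>] by (intro tpowI) (auto intro: finite_subset)
qed

lemma Wsub_tpow:
  assumes "\<forall>i x. fsupp (va i x)" "w \<in> Wsub va d \<mu>"
  shows "w \<in> tpow d"
proof -
  obtain p where p: "\<forall>\<nu>. p \<nu> \<in> tpow d" and w_eq: "w = (\<lambda>\<rho>. \<Sum>\<nu>\<in>orbit d \<mu>. tact va (delta \<nu>) (p \<nu>) \<rho>)"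
    using assms(2) unfolding Wsub_def by blast
  show ?thesis
    unfolding w_eq using finite_orbit
  proof (rule tpow_sum)
    fix \<nu> assume "\<nu> \<in> orbit d \<mu>"
    then show "tact va (delta \<nu>) (p \<nu>) \<in> tpow d"
      using assms(1) p delta_tpow[OF length_orbit] tact_tpow by blast
  qed
qed

lemma sig_Wsub:
  assumes w: "w \<in> Wsub va d \<mu>" and i: "1 \<le> i" "i < d"
  shows "sig i w \<in> Wsub va d \<mu>"
proof -
  obtain p where p: "\<forall>\<nu>. p \<nu> \<in> tpow d" and w_eq: "w = (\<lambda>\<rho>. \<Sum>\<nu>\<in>orbit d \<mu>. tact va (delta \<nu>) (p \<nu>) \<rho>)"
    using w unfolding Wsub_def by blast
  define p' where "p' \<nu> = sig i (p (swp i \<nu>))" for \<nu>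
  have p': "\<forall>\<nu>. p' \<nu> \<in> tpow d"
    unfolding p'_def using p i by (blast intro: sig_tpow)
  have "sig i w \<rho> = (\<Sum>\<nu>\<in>orbit d \<mu>. tact va (delta \<nu>) (p' \<nu>) \<rho>)" for \<rho>
  proof -
    have "sig i w \<rho> = (\<Sum>\<nu>\<in>orbit d \<mu>. tact va (delta \<nu>) (p \<nu>) (swp i \<rho>))"
      by (simp add: sig_def w_eq)
    also have "\<dots> = (\<Sum>\<nu>\<in>orbit d \<mu>. tact va (delta (swp i \<nu>)) (sig i (p \<nu>)) \<rho>)"
    proof (rule sum.cong[OF refl])
      fix \<nu> assume "\<nu> \<in> orbit d \<mu>"
      then have len: "length \<nu> = d"
        by (rule length_orbit)
      show "tact va (delta \<nu>) (p \<nu>) (swp i \<rho>) = tact va (delta (swp i \<nu>)) (sig i (p \<nu>)) \<rho>"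
        using tact_swp[OF length_supp_delta[OF len] tpow_length[OF p[rule_format]] i]
        by (simp add: sig_delta[OF len i])
    qed
    also have "\<dots> = (\<Sum>\<nu>\<in>orbit d \<mu>. tact va (delta (swp i \<nu>)) (p' (swp i \<nu>)) \<rho>)"
    proof (rule sum.cong[OF refl])
      fix \<nu> assume "\<nu> \<in> orbit d \<mu>"
      then have "swp i (swp i \<nu>) = \<nu>"
        using i length_orbit by (metis swp_swp)
      then show "tact va (delta (swp i \<nu>)) (sig i (p \<nu>)) \<rho> = tact va (delta (swp i \<nu>)) (p' (swp i \<nu>)) \<rho>"
        by (simp add: p'_def)
    qed
    also have "\<dots> = (\<Sum>\<nu>\<in>orbit d \<mu>. tact va (delta \<nu>) (p' \<nu>) \<rho>)"
      using sum.reindex[OF inj_on_swp_orbit[OF i], of "\<lambda>\<nu>. tact va (delta \<nu>) (p' \<nu>) \<rho>"]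
      by (simp add: swp_image_orbit[OF i])
    finally show ?thesis .
  qed
  then show ?thesis
    unfolding Wsub_def using p' by blast
qed

subsection \<open>Action through a counit\<close>

definition eps_tensor :: "('x \<Rightarrow> 'k::comm_ring_1) \<Rightarrow> nat \<Rightarrow> ('x list \<Rightarrow> 'k) \<Rightarrow> 'k" where
  "eps_tensor \<epsilon> d b = (\<Sum>xs\<in>supp b. b xs * (\<Prod>k<d. \<epsilon> (xs ! k)))"

lemma eps_tensor_eq_sum:
  assumes "finite F" "supp b \<subseteq> F"
  shows "eps_tensor \<epsilon> d b = (\<Sum>xs\<in>F. b xs * (\<Prod>k<d. \<epsilon> (xs ! k)))"
  unfolding eps_tensor_def using assms by (intro sum.mono_neutral_left) (auto simp: supp_def)

lemma eps_tensor_add: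
  assumes "finite (supp b)" "finite (supp c)"
  shows "eps_tensor \<epsilon> d (\<lambda>xs. b xs + c xs) = eps_tensor \<epsilon> d b + eps_tensor \<epsilon> d c"
proof -
  have "supp (\<lambda>xs. b xs + c xs) \<subseteq> supp b \<union> supp c"
    by (auto simp: supp_def)
  then show ?thesis
    using assms by (simp add: eps_tensor_eq_sum[of "supp b \<union> supp c"] distrib_right sum.distrib)
qed

lemma eps_tensor_scale:
  assumes "finite (supp b)"
  shows "eps_tensor \<epsilon> d (\<lambda>xs. c * b xs) = c * eps_tensor \<epsilon> d b"
proof -
  have "supp (\<lambda>xs. c * b xs) \<subseteq> supp b"
    by (auto simp: supp_def)
  then show ?thesis
    using assms by (simp add: eps_tensor_eq_sum[of "supp b"] sum_distrib_left mult_ac)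
qed

lemma eps_tensor_sig:
  assumes "\<forall>x\<in>supp b. length x = d" "1 \<le> i" "i < d"
  shows "eps_tensor \<epsilon> d (sig i b) = eps_tensor \<epsilon> d b"
proof -
  have "eps_tensor \<epsilon> d (sig i b) = (\<Sum>xs\<in>swp i ` supp b. b (swp i xs) * (\<Prod>k<d. \<epsilon> (xs ! k)))"
    unfolding eps_tensor_def supp_sig[OF assms] by (simp add: sig_def)
  also have "\<dots> = (\<Sum>xs\<in>supp b. b (swp i (swp i xs)) * (\<Prod>k<d. \<epsilon> (swp i xs ! k)))"
    by (simp add: sum.reindex[OF inj_on_swp_supp[OF assms]])
  also have "\<dots> = eps_tensor \<epsilon> d b"
    unfolding eps_tensor_def using assms
    by (intro sum.cong refl) (simp add: prod_swp[where f = "\<lambda>k y. \<epsilon> y"])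
  finally show ?thesis .
qed

lemma length_supp_emb: "\<forall>x\<in>supp (emb u d i Z). length x = d"
  by (auto simp: supp_def emb_def)

lemma emb_Suc:
  assumes "1 \<le> k" "k + 1 < d"
  shows "emb u d (k + 1) Z = sig k (sig (k + 1) (emb u d k Z))"
proof
  fix xs
  show "emb u d (k + 1) Z xs = sig k (sig (k + 1) (emb u d k Z)) xs"
  proof (cases "length xs = d")
    case True
    define ys where "ys = swp (k + 1) (swp k xs)"
    have ys: "length ys = d" "ys ! (k - 1) = xs ! k" "ys ! k = xs ! (k + 1)" "ys ! (k + 1) = xs ! (k - 1)"
      "\<And>j. j < d \<Longrightarrow> j \<notin> {k - 1, k, k + 1} \<Longrightarrow> ys ! j = xs ! j"
      using assms True by (auto simp: ys_def nth_swp)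
    have split: "{..<d} - {k - 1, k} = insert (k + 1) ({..<d} - {k - 1, k, k + 1})"
      "{..<d} - {k, k + 1} = insert (k - 1) ({..<d} - {k - 1, k, k + 1})"
      using assms by auto
    have "(\<Prod>j\<in>{..<d} - {k - 1, k}. u (ys ! j)) = (\<Prod>j\<in>{..<d} - {k, k + 1}. u (xs ! j))"
      unfolding split using ys(4,5) by (simp add: prod.insert_remove)
    then show ?thesis
      using True ys(1-3) unfolding emb_def sig_def ys_def[symmetric] by simp
  qed (simp add: emb_def sig_def)
qed

text \<open>Under \<open>\<epsilon>\<^sup>\<otimes>\<^sup>d\<close> the scalar \<open>Z\<^sub>i\<close> does not depend on \<open>i\<close>, since \<open>Z\<^sub>i\<^sub>+\<^sub>1\<close> is a place
  permutation of \<open>Z\<^sub>i\<close>.\<close>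
lemma eps_tensor_emb:
  assumes "1 \<le> i" "i < d"
  shows "eps_tensor \<epsilon> d (emb u d i Z) = eps_tensor \<epsilon> d (emb u d 1 Z)"
  using assms
proof (induction i)
  case (Suc i)
  show ?case
  proof (cases "i = 0")
    case False
    then have i: "1 \<le> i" "i + 1 < d"
      using Suc by auto
    have "eps_tensor \<epsilon> d (emb u d (i + 1) Z) = eps_tensor \<epsilon> d (sig i (sig (i + 1) (emb u d i Z)))"
      by (simp only: emb_Suc[OF i])
    also have "\<dots> = eps_tensor \<epsilon> d (sig (i + 1) (emb u d i Z))"
      using i by (intro eps_tensor_sig length_supp_sig length_supp_emb) auto
    also have "\<dots> = eps_tensor \<epsilon> d (emb u d i Z)"
      using i by (intro eps_tensor_sig length_supp_emb) auto
    finally show ?thesis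
      using Suc i by simp
  qed simp
qed simp

lemma tens_counit:
  assumes va: "\<forall>i x. va i x = (\<lambda>j. \<epsilon> x * delta i j)"
    and "length \<nu> = d" "length xs = d"
  shows "tens (map2 va \<nu> xs) \<rho> = (\<Prod>k<d. \<epsilon> (xs ! k)) * delta \<nu> \<rho>"
proof (cases "length \<rho> = d")
  case True
  then show ?thesis
    using assms by (simp add: tens_map2 prod.distrib prod_delta)
qed (use assms in \<open>auto simp: tens_map2 delta_def\<close>)

lemma tact_counit:
  assumes va: "\<forall>i x. va i x = (\<lambda>j. \<epsilon> x * delta i j)"
    and "finite (supp w)" "\<forall>x\<in>supp w. length x = d" "\<forall>x\<in>supp b. length x = d"
  shows "tact va w b = (\<lambda>\<rho>. eps_tensor \<epsilon> d b * w \<rho>)"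
proof
  fix \<rho>
  have "tact va w b \<rho> = (\<Sum>\<nu>\<in>supp w. \<Sum>xs\<in>supp b. w \<nu> * b xs * ((\<Prod>k<d. \<epsilon> (xs ! k)) * delta \<nu> \<rho>))"
    unfolding tact_def bilin_def using assms(3,4) by (intro sum.cong refl) (simp add: tens_counit[OF va])
  also have "\<dots> = (\<Sum>\<nu>\<in>supp w. w \<nu> * delta \<nu> \<rho> * eps_tensor \<epsilon> d b)"
    unfolding eps_tensor_def by (simp add: sum_distrib_left sum_distrib_right mult_ac)
  also have "\<dots> = (\<Sum>\<nu>\<in>supp w. if \<nu> = \<rho> then eps_tensor \<epsilon> d b * w \<rho> else 0)"
    by (intro sum.cong refl) (simp add: delta_def)
  also have "\<dots> = eps_tensor \<epsilon> d b * w \<rho>"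
    using assms(2) by (simp add: sum.delta' supp_def)
  finally show "tact va w b \<rho> = eps_tensor \<epsilon> d b * w \<rho>" .
qed

lemma tact_emb_counit:
  assumes va: "\<forall>i x. va i x = (\<lambda>j. \<epsilon> x * delta i j)"
    and "finite (supp w)" "\<forall>x\<in>supp w. length x = d" "1 \<le> i" "i < d"
  shows "tact va w (emb u d i Z) = (\<lambda>\<rho>. eps_tensor \<epsilon> d (emb u d 1 Z) * w \<rho>)"
  by (simp only: tact_counit[OF va assms(2,3) length_supp_emb] eps_tensor_emb[OF assms(4,5)])

lemma Wsub_counit:
  assumes va: "\<forall>i x. va i x = (\<lambda>j. \<epsilon> x * delta i j)"
  shows "Wsub va d \<mu> =
    {(\<lambda>\<rho>. if \<rho> \<in> orbit d \<mu> then eps_tensor \<epsilon> d (p \<rho>) else 0) | p. \<forall>\<nu>. p \<nu> \<in> tpow d}"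
proof -
  have "(\<lambda>\<rho>. \<Sum>\<nu>\<in>orbit d \<mu>. tact va (delta \<nu>) (p \<nu>) \<rho>) =
      (\<lambda>\<rho>. if \<rho> \<in> orbit d \<mu> then eps_tensor \<epsilon> d (p \<rho>) else 0)" if p: "\<forall>\<nu>. p \<nu> \<in> tpow d" for p
  proof -
    have "tact va (delta \<nu>) (p \<nu>) = (\<lambda>\<rho>. eps_tensor \<epsilon> d (p \<nu>) * delta \<nu> \<rho>)"
      if "\<nu> \<in> orbit d \<mu>" for \<nu>
      using tact_counit[OF va finite_supp_delta length_supp_delta[OF length_orbit[OF that]]
          tpow_length[OF p[rule_format]]] .
    then show ?thesis
      by (simp add: delta_def finite_orbit if_distrib cong: if_cong)
  qed
  then show ?thesis
    unfolding Wsub_def by (metis (no_types, lifting))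
qed

lemma Wsub_counit_vanishes:
  assumes "\<forall>i x. va i x = (\<lambda>j. \<epsilon> x * delta i j)" "w \<in> Wsub va d \<mu>" "\<rho> \<notin> orbit d \<mu>"
  shows "w \<rho> = 0"
  using assms(2,3) unfolding Wsub_counit[OF assms(1)] by auto

lemma supp_Wsub_counit:
  assumes va: "\<forall>i x. va i x = (\<lambda>j. \<epsilon> x * delta i j)" and "w \<in> Wsub va d \<mu>"
  shows "finite (supp w)" "\<forall>x\<in>supp w. length x = d"
proof -
  have "supp w \<subseteq> orbit d \<mu>"
    using Wsub_counit_vanishes[OF va assms(2)] by (auto simp: supp_def)
  then show "finite (supp w)" "\<forall>x\<in>supp w. length x = d"
    using finite_subset[OF _ finite_orbit] length_orbit by blast+
qed

lemma tact_Wsub_counit: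
  assumes va: "\<forall>i x. va i x = (\<lambda>j. \<epsilon> x * delta i j)"
    and "w \<in> Wsub va d \<mu>" "\<forall>x\<in>supp b. length x = d"
  shows "tact va w b = (\<lambda>\<rho>. eps_tensor \<epsilon> d b * w \<rho>)"
  using tact_counit[OF va supp_Wsub_counit[OF va assms(2)] assms(3)] .

lemma Wsub_counit_eqI:
  assumes va: "\<forall>i x. va i x = (\<lambda>j. \<epsilon> x * delta i j)" and \<mu>: "length \<mu> = d" "distinct \<mu>"
    and "w \<in> Wsub va d \<mu>" "w' \<in> Wsub va d \<mu>"
    and "\<And>\<rho>. length \<rho> = d \<Longrightarrow> distinct \<rho> \<Longrightarrow> w \<rho> = w' \<rho>"
  shows "w = w'"
proof
  fix \<rho>
  show "w \<rho> = w' \<rho>"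
  proof (cases "\<rho> \<in> orbit d \<mu>")
    case False
    then show ?thesis
      using Wsub_counit_vanishes[OF va] assms(4,5) by metis
  qed (use assms(6) length_orbit distinct_orbit[OF _ \<mu>] in blast)
qed

text \<open>The action of \<open>H\<^sub>i\<close> on coefficient functions prescribed by the rule when \<open>S\<^sub>i\<close>, \<open>R\<^sub>i\<close>
  act as the scalars \<open>s\<close>, \<open>r\<close>: \<open>v\<^sub>\<nu>.H\<^sub>i = v\<^bsub>\<nu>s\<^sub>i\<^esub>\<close> if \<open>\<nu>\<close> increases at \<open>i\<close>, and
  \<open>v\<^sub>\<nu>.H\<^sub>i = r v\<^bsub>\<nu>s\<^sub>i\<^esub> + s v\<^sub>\<nu>\<close> otherwise. The entries \<open>\<nu>\<^sub>i\<close>, \<open>\<nu>\<^sub>i\<^sub>+\<^sub>1\<close> are the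
  list positions \<open>i - 1\<close>, \<open>i\<close>.\<close>
definition hecke_op :: "'k::comm_ring_1 \<Rightarrow> 'k \<Rightarrow> nat \<Rightarrow> ('i::linorder list \<Rightarrow> 'k) \<Rightarrow> 'i list \<Rightarrow> 'k" where
  "hecke_op s r i w = (\<lambda>\<rho>. if \<rho> ! i < \<rho> ! (i - 1) then w (swp i \<rho>) + s * w \<rho> else r * w (swp i \<rho>))"

lemma hecke_op_add: "hecke_op s r i (\<lambda>\<nu>. w \<nu> + w' \<nu>) = (\<lambda>\<nu>. hecke_op s r i w \<nu> + hecke_op s r i w' \<nu>)"
  by (auto simp: hecke_op_def algebra_simps)

lemma hecke_op_scale: "hecke_op s r i (\<lambda>\<nu>. c * w \<nu>) = (\<lambda>\<nu>. c * hecke_op s r i w \<nu>)"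
  by (auto simp: hecke_op_def algebra_simps)

lemma hecke_op_quadratic:
  fixes \<rho> :: "'i::linorder list"
  assumes "distinct \<rho>" "1 \<le> i" "i < length \<rho>"
  shows "hecke_op s r i (hecke_op s r i w) \<rho> = s * hecke_op s r i w \<rho> + r * w \<rho>"
proof -
  have "\<rho> ! (i - 1) \<noteq> \<rho> ! i"
    using assms by (simp add: nth_eq_iff_index_eq)
  then show ?thesis
    using assms by (cases "\<rho> ! i < \<rho> ! (i - 1)") (auto simp: hecke_op_def nth_swp algebra_simps)
qed

lemma hecke_op_braid:
  fixes \<rho> :: "'i::linorder list"
  assumes "distinct \<rho>" "1 \<le> k" "k + 1 < length \<rho>"
  shows "hecke_op s r k (hecke_op s r (k + 1) (hecke_op s r k w)) \<rho>
       = hecke_op s r (k + 1) (hecke_op s r k (hecke_op s r (k + 1) w)) \<rho>"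
proof -
  define x y z where "x = \<rho> ! (k - 1)" and "y = \<rho> ! k" and "z = \<rho> ! (k + 1)"
  have "x \<noteq> y" "x \<noteq> z" "y \<noteq> z"
    using assms by (simp_all add: x_def y_def z_def nth_eq_iff_index_eq)
  then have ord: "x < y \<and> y < z \<and> x < z \<or> x < z \<and> z < y \<and> x < y \<or> y < x \<and> x < z \<and> y < z \<or>
      y < z \<and> z < x \<and> y < x \<or> z < x \<and> x < y \<and> z < y \<or> z < y \<and> y < x \<and> z < x"
    by (metis linorder_neqE less_trans)
  obtain A B AB BA C where A: "swp k \<rho> = A" and B: "swp (k + 1) \<rho> = B"
    and AB: "swp k B = AB" and BA: "swp (k + 1) A = BA" and C: "swp k BA = C"
    by simp
  have C': "swp (k + 1) AB = C"
    using swp_braid[of k \<rho>] assms A B AB BA C by simp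
  have len: "length A = length \<rho>" "length B = length \<rho>" "length AB = length \<rho>"
    "length BA = length \<rho>" "length C = length \<rho>"
    using A B AB BA C by auto
  have undo: "swp k A = \<rho>" "swp (k + 1) B = \<rho>" "swp k AB = B" "swp (k + 1) BA = A"
    "swp k C = BA" "swp (k + 1) C = AB"
    using assms A B AB BA C C' len swp_swp by (metis add_lessD1 le_add2)+
  have entries: "\<rho> ! (k - 1) = x" "\<rho> ! k = y" "\<rho> ! (k + 1) = z"
    "A ! (k - 1) = y" "A ! k = x" "A ! (k + 1) = z"
    "B ! (k - 1) = x" "B ! k = z" "B ! (k + 1) = y"
    "AB ! (k - 1) = z" "AB ! k = x" "AB ! (k + 1) = y"
    "BA ! (k - 1) = y" "BA ! k = z" "BA ! (k + 1) = x"
    "C ! (k - 1) = z" "C ! k = y" "C ! (k + 1) = x"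
    using assms A B AB BA C by (auto simp: x_def y_def z_def nth_swp)
  have k: "k + 1 - 1 = k"
    by simp
  show ?thesis
    unfolding hecke_op_def
    by (simp only: k A B AB BA C C' undo entries)
      (use ord in \<open>elim disjE conjE; simp add: algebra_simps less_not_sym\<close>)
qed

lemma hecke_op_commute:
  fixes \<rho> :: "'i::linorder list"
  assumes "distinct \<rho>" "1 \<le> i" "i + 2 \<le> j" "j < length \<rho>"
  shows "hecke_op s r i (hecke_op s r j w) \<rho> = hecke_op s r j (hecke_op s r i w) \<rho>"
proof -
  define a b c e where "a = \<rho> ! (i - 1)" and "b = \<rho> ! i" and "c = \<rho> ! (j - 1)" and "e = \<rho> ! j"
  have "a \<noteq> b" "c \<noteq> e"
    using assms by (simp_all add: a_def b_def c_def e_def nth_eq_iff_index_eq)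
  then have ord: "(a < b \<or> b < a) \<and> (c < e \<or> e < c)"
    by auto
  obtain A B C where A: "swp i \<rho> = A" and B: "swp j \<rho> = B" and C: "swp i B = C"
    by simp
  have C': "swp j A = C"
    using swp_commute[of i \<rho> j] assms A B C by simp
  have len: "length A = length \<rho>" "length B = length \<rho>" "length C = length \<rho>"
    using A B C by auto
  have undo: "swp i A = \<rho>" "swp j B = \<rho>" "swp i C = B" "swp j C = A"
    using assms A B C C' len swp_swp by (metis add_leD1 le_add2 order.strict_trans1 le_trans)+
  have entries: "\<rho> ! (i - 1) = a" "\<rho> ! i = b" "\<rho> ! (j - 1) = c" "\<rho> ! j = e"
    "A ! (i - 1) = b" "A ! i = a" "A ! (j - 1) = c" "A ! j = e"
    "B ! (i - 1) = a" "B ! i = b" "B ! (j - 1) = e" "B ! j = c"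
    "C ! (i - 1) = b" "C ! i = a" "C ! (j - 1) = e" "C ! j = c"
    using assms A B C by (auto simp: a_def b_def c_def e_def nth_swp)
  show ?thesis
    unfolding hecke_op_def
    by (simp only: A B C C' undo entries)
      (use ord in \<open>elim disjE conjE; simp add: algebra_simps less_not_sym\<close>)
qed

lemma hecke_op_Wsub:
  assumes va: "\<forall>i x. va i x = (\<lambda>j. \<epsilon> x * delta i j)"
    and w: "w \<in> Wsub va d \<mu>" and i: "1 \<le> i" "i < d"
  shows "hecke_op s r i w \<in> Wsub va d \<mu>"
proof -
  obtain p where p: "\<forall>\<nu>. p \<nu> \<in> tpow d"
    and w_eq: "w = (\<lambda>\<rho>. if \<rho> \<in> orbit d \<mu> then eps_tensor \<epsilon> d (p \<rho>) else 0)"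
    using w unfolding Wsub_counit[OF va] by auto
  define p' where "p' \<rho> = (if \<rho> ! i < \<rho> ! (i - 1) then (\<lambda>xs. p (swp i \<rho>) xs + s * p \<rho> xs)
      else (\<lambda>xs. r * p (swp i \<rho>) xs))" for \<rho>
  have p': "\<forall>\<nu>. p' \<nu> \<in> tpow d"
    using p by (auto simp: p'_def intro!: tpow_add tpow_scale)
  have fin: "finite (supp (p \<nu>))" "finite (supp (\<lambda>xs. c * p \<nu> xs))" for \<nu> c
    using p finite_supp_tpow tpow_scale by blast+
  have "hecke_op s r i w = (\<lambda>\<rho>. if \<rho> \<in> orbit d \<mu> then eps_tensor \<epsilon> d (p' \<rho>) else 0)"
    using i by (auto simp: hecke_op_def w_eq p'_def swp_in_orbit_iff eps_tensor_add[OF fin]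
        eps_tensor_scale[OF fin(1)])
  then show ?thesis
    unfolding Wsub_counit[OF va] using p' by blast
qed

lemma hecke_op_quadratic_Wsub:
  assumes va: "\<forall>i x. va i x = (\<lambda>j. \<epsilon> x * delta i j)" and \<mu>: "length \<mu> = d" "distinct \<mu>"
    and w: "w \<in> Wsub va d \<mu>" and i: "1 \<le> i" "i < d"
  shows "hecke_op s r i (hecke_op s r i w) = (\<lambda>\<rho>. s * hecke_op s r i w \<rho> + r * w \<rho>)"
proof
  fix \<rho>
  show "hecke_op s r i (hecke_op s r i w) \<rho> = s * hecke_op s r i w \<rho> + r * w \<rho>"
  proof (cases "\<rho> \<in> orbit d \<mu>")
    case True
    then show ?thesis
      using i length_orbit distinct_orbit[OF _ \<mu>] by (intro hecke_op_quadratic) auto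
  next
    case False
    have "hecke_op s r i w \<in> Wsub va d \<mu>"
      using w i by (rule hecke_op_Wsub[OF va])
    moreover from this have "hecke_op s r i (hecke_op s r i w) \<in> Wsub va d \<mu>"
      using i by (rule hecke_op_Wsub[OF va])
    ultimately show ?thesis
      using False w by (simp add: Wsub_counit_vanishes[OF va])
  qed
qed

lemma qwp_module_on_hecke_op:
  fixes \<mu> :: "'i::linorder list" and u :: "'x \<Rightarrow> 'k::comm_ring_1" and S R :: "'x list \<Rightarrow> 'k"
  assumes va: "\<forall>i x. va i x = (\<lambda>j. \<epsilon> x * delta i j)" and \<mu>: "length \<mu> = d" "distinct \<mu>"
  defines "s \<equiv> eps_tensor \<epsilon> d (emb u d 1 S)" and "r \<equiv> eps_tensor \<epsilon> d (emb u d 1 R)"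
  shows "qwp_module_on u va d S R (Wsub va d \<mu>) (hecke_op s r)"
proof -
  let ?W = "Wsub va d \<mu>" and ?h = "hecke_op s r"
  have closed: "?h i w \<in> ?W" if "w \<in> ?W" "i \<in> {1..<d}" for i w
    using hecke_op_Wsub[OF va] that by auto
  have act: "tact va w (emb u d i Z) = (\<lambda>\<rho>. eps_tensor \<epsilon> d (emb u d 1 Z) * w \<rho>)"
    if "w \<in> ?W" "i \<in> {1..<d}" for w i Z
    using that by (intro tact_emb_counit[OF va supp_Wsub_counit[OF va]]) auto
  show ?thesis
    unfolding qwp_module_on_def
  proof (intro conjI ballI allI impI)
    fix i w and b :: "'x list \<Rightarrow> 'k" assume i: "i \<in> {1..<d}" and w: "w \<in> ?W" and b: "b \<in> tpow d"
    show "tact va (?h i w) b = ?h i (tact va w (sig i b))"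
      using i tpow_length[OF b] by (simp add: tact_Wsub_counit[OF va closed[OF w i]]
          tact_Wsub_counit[OF va w] length_supp_sig eps_tensor_sig hecke_op_scale)
  next
    fix i w assume "i \<in> {1..<d}" and "w \<in> ?W"
    then show "?h i (?h i w) = (\<lambda>\<nu>. ?h i (tact va w (emb u d i S)) \<nu> + tact va w (emb u d i R) \<nu>)"
      by (simp add: act s_def r_def hecke_op_scale hecke_op_quadratic_Wsub[OF va \<mu>])
  next
    fix k w assume "1 \<le> k \<and> k + 1 < d" and "w \<in> ?W"
    then show "?h k (?h (k + 1) (?h k w)) = ?h (k + 1) (?h k (?h (k + 1) w))"
      by (intro Wsub_counit_eqI[OF va \<mu>] closed hecke_op_braid) auto
  next
    fix i j w assume "i \<in> {1..<d}" "j \<in> {1..<d}" "i + 2 \<le> j \<or> j + 2 \<le> i" and "w \<in> ?W"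
    then show "?h i (?h j w) = ?h j (?h i w)"
      by (intro Wsub_counit_eqI[OF va \<mu>] closed) (auto intro: hecke_op_commute hecke_op_commute[symmetric])
  qed (auto intro: closed hecke_op_add hecke_op_scale)
qed

lemma qwp_rule_hecke_op:
  fixes \<mu> :: "'i::linorder list" and u :: "'x \<Rightarrow> 'k::comm_ring_1" and S R :: "'x list \<Rightarrow> 'k"
  assumes va: "\<forall>i x. va i x = (\<lambda>j. \<epsilon> x * delta i j)" and \<mu>: "length \<mu> = d" "distinct \<mu>"
  defines "s \<equiv> eps_tensor \<epsilon> d (emb u d 1 S)" and "r \<equiv> eps_tensor \<epsilon> d (emb u d 1 R)"
  shows "qwp_rule u va d \<mu> S R (hecke_op s r)"
  unfolding qwp_rule_def
proof (intro ballI conjI impI)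
  fix i \<nu> assume i: "i \<in> {1..<d}" and \<nu>: "\<nu> \<in> orbit d \<mu>"
  have len: "length \<nu> = d"
    using \<nu> by (rule length_orbit)
  have "\<nu> ! (i - 1) \<noteq> \<nu> ! i"
    using distinct_orbit[OF \<nu> \<mu>] i len by (subst nth_eq_iff_index_eq) auto
  moreover have swp_entries: "swp i \<nu> ! (i - 1) = \<nu> ! i" "swp i \<nu> ! i = \<nu> ! (i - 1)"
    using i len by (auto simp: nth_swp)
  ultimately have "swp i \<nu> \<noteq> \<nu>"
    by auto
  then have hecke_delta: "hecke_op s r i (delta \<nu>) \<rho> =
      (if \<rho> = swp i \<nu> then (if \<nu> ! (i - 1) < \<nu> ! i then 1 else r)
       else if \<rho> = \<nu> \<and> \<nu> ! i < \<nu> ! (i - 1) then s else 0)" for \<rho>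
    using i len swp_entries by (auto simp: hecke_op_def delta_def swp_eq_iff)
  show "hecke_op s r i (delta \<nu>) = delta (swp i \<nu>)" if "\<nu> ! (i - 1) < \<nu> ! i"
    using that by (auto simp: fun_eq_iff hecke_delta delta_apply)
  have "tact va (delta (swp i \<nu>)) (emb u d i R) = (\<lambda>\<rho>. r * delta (swp i \<nu>) \<rho>)"
    "tact va (delta \<nu>) (emb u d i S) = (\<lambda>\<rho>. s * delta \<nu> \<rho>)"
    unfolding s_def r_def using i len
    by (intro tact_emb_counit[OF va finite_supp_delta length_supp_delta]; simp)+
  then show "hecke_op s r i (delta \<nu>) =
      (\<lambda>\<rho>. tact va (delta (swp i \<nu>)) (emb u d i R) \<rho> + tact va (delta \<nu>) (emb u d i S) \<rho>)"
    if "\<nu> ! i < \<nu> ! (i - 1)"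
    using that \<open>swp i \<nu> \<noteq> \<nu>\<close> by (auto simp: fun_eq_iff hecke_delta delta_apply)
qed

lemma extends_to_qwp_module_counit:
  fixes \<mu> :: "'i::linorder list" and u :: "'x \<Rightarrow> 'k::comm_ring_1" and S R :: "'x list \<Rightarrow> 'k"
  assumes "\<forall>i x. va i x = (\<lambda>j. \<epsilon> x * delta i j)" "length \<mu> = d" "distinct \<mu>"
  shows "extends_to_qwp_module u va d \<mu> S R"
  unfolding extends_to_qwp_module_def
  using qwp_module_on_hecke_op[OF assms] qwp_rule_hecke_op[OF assms] by blast

subsection \<open>The case \<open>S = 0\<close>, \<open>R = 1 \<otimes> 1\<close>\<close>

lemma tone_apply: "tone u d xs = (if length xs = d then \<Prod>k<d. u (xs ! k) else 0)"
  by (simp add: tone_def tens_def)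

lemma emb_tone:
  assumes "1 \<le> i" "i < d"
  shows "emb u d i (tone u 2) = tone u d"
proof
  fix xs
  show "emb u d i (tone u 2) xs = tone u d xs"
  proof (cases "length xs = d")
    case True
    have split: "{..<d} = insert i (insert (i - 1) ({..<d} - {i - 1, i}))"
      using assms by auto
    have "(\<Prod>k<d. u (xs ! k)) = (\<Prod>k\<in>insert i (insert (i - 1) ({..<d} - {i - 1, i})). u (xs ! k))"
      by (simp only: split[symmetric])
    also have "\<dots> = u (xs ! i) * (u (xs ! (i - 1)) * (\<Prod>k\<in>{..<d} - {i - 1, i}. u (xs ! k)))"
      using assms by simp
    finally show ?thesis
      using True by (simp add: emb_def tone_apply numeral_2_eq_2 mult_ac)
  qed (simp add: emb_def tone_apply)
qed

lemma emb_zero: "emb u d i (\<lambda>_. 0) = (\<lambda>_. 0)"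
  by (auto simp: emb_def)

lemma tact_zero: "tact va w (\<lambda>_. 0) = (\<lambda>_. 0)"
  by (auto simp: tact_def bilin_def supp_def)

lemma supp_tone: "supp (tone u d) \<subseteq> {xs. set xs \<subseteq> supp u \<and> length xs = d}"
proof
  fix xs assume "xs \<in> supp (tone u d)"
  then have len: "length xs = d" and "(\<Prod>k<d. u (xs ! k)) \<noteq> 0"
    by (auto simp: supp_def tone_apply split: if_splits)
  then have "u (xs ! k) \<noteq> 0" if "k < d" for k
    using that by (auto intro: prod_zero)
  then show "xs \<in> {xs. set xs \<subseteq> supp u \<and> length xs = d}"
    using len by (auto simp: supp_def in_set_conv_nth)
qed

text \<open>The unit axiom of \<open>V\<close>, applied in each tensor factor.\<close>
lemma sum_tone_tens:
  assumes rm: "right_module m u va" and fu: "fsupp u" and len: "length \<nu> = d"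
  shows "(\<Sum>xs\<in>supp (tone u d). tone u d xs * tens (map2 va \<nu> xs) \<rho>) = delta \<nu> \<rho>"
proof -
  define L where "L = {xs. set xs \<subseteq> supp u \<and> length xs = d}"
  have "finite L"
    unfolding L_def using fu finite_lists_length_eq by (auto simp: fsupp_def)
  then have "(\<Sum>xs\<in>supp (tone u d). tone u d xs * tens (map2 va \<nu> xs) \<rho>) =
      (\<Sum>xs\<in>L. tone u d xs * tens (map2 va \<nu> xs) \<rho>)"
    using supp_tone[of u d] unfolding L_def by (intro sum.mono_neutral_left) (auto simp: supp_def)
  also have "\<dots> = delta \<nu> \<rho>"
  proof (cases "length \<rho> = d")
    case True
    have unit: "(\<Sum>x\<in>supp u. u x * va i x j) = delta i j" for i j
      using rm unfolding right_module_def linext_def by metis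
    have "(\<Sum>xs\<in>L. tone u d xs * tens (map2 va \<nu> xs) \<rho>) =
        (\<Sum>xs\<in>L. \<Prod>k<d. u (xs ! k) * va (\<nu> ! k) (xs ! k) (\<rho> ! k))"
      using True len by (intro sum.cong refl) (auto simp: L_def tone_apply tens_map2 prod.distrib)
    also have "\<dots> = (\<Prod>k<d. \<Sum>x\<in>supp u. u x * va (\<nu> ! k) x (\<rho> ! k))"
      unfolding L_def using fu by (intro sum_lists_length_prod) (simp add: fsupp_def)
    also have "\<dots> = delta \<nu> \<rho>"
      using len True by (simp add: unit prod_delta)
    finally show ?thesis .
  next
    case False
    then show ?thesis
      using len by (auto simp: L_def tens_map2 delta_apply intro!: sum.neutral)
  qed
  finally show ?thesis .
qed

lemma tact_tone:
  assumes "right_module m u va" "fsupp u" "finite (supp w)" "\<forall>x\<in>supp w. length x = d"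
  shows "tact va w (tone u d) = w"
proof
  fix \<rho>
  have "tact va w (tone u d) \<rho> =
      (\<Sum>\<nu>\<in>supp w. w \<nu> * (\<Sum>xs\<in>supp (tone u d). tone u d xs * tens (map2 va \<nu> xs) \<rho>))"
    unfolding tact_def bilin_def by (simp add: sum_distrib_left mult_ac)
  also have "\<dots> = (\<Sum>\<nu>\<in>supp w. if \<nu> = \<rho> then w \<rho> else 0)"
    using assms by (intro sum.cong refl) (auto simp: sum_tone_tens delta_apply)
  also have "\<dots> = w \<rho>"
    using assms(3) by (simp add: sum.delta supp_def)
  finally show "tact va w (tone u d) \<rho> = w \<rho>" .
qed

lemma qwp_module_on_flip:
  fixes va :: "'i \<Rightarrow> 'x \<Rightarrow> 'i \<Rightarrow> 'k::comm_ring_1"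
  assumes rm: "right_module m u va" and fu: "fsupp u"
  shows "qwp_module_on u va d (\<lambda>_. 0) (tone u 2) (Wsub va d \<mu>) sig"
proof -
  let ?W = "Wsub va d \<mu>"
  have len: "\<forall>x\<in>supp w. length x = d" and fin: "finite (supp w)" if "w \<in> ?W" for w
    using Wsub_tpow[of va, OF _ that] rm tpow_length finite_supp_tpow
    by (auto simp: right_module_def)
  show ?thesis
    unfolding qwp_module_on_def
  proof (intro conjI ballI allI impI)
    fix i w assume "i \<in> {1..<d}" "w \<in> ?W"
    then show "sig i w \<in> ?W"
      by (auto intro: sig_Wsub)
  next
    fix i w and b :: "'x list \<Rightarrow> 'k" assume i: "i \<in> {1..<d}" and w: "w \<in> ?W" and b: "b \<in> tpow d"
    have "tact va (sig i w) (sig i (sig i b)) = sig i (tact va w (sig i b))"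
      using i tact_swp[OF len[OF w] length_supp_sig[OF tpow_length[OF b]]] by (auto simp: sig_def)
    then show "tact va (sig i w) b = sig i (tact va w (sig i b))"
      using i sig_sig[OF tpow_length[OF b]] by simp
  next
    fix i w assume "i \<in> {1..<d}" and w: "w \<in> ?W"
    then show "sig i (sig i w) =
        (\<lambda>\<nu>. sig i (tact va w (emb u d i (\<lambda>_. 0))) \<nu> + tact va w (emb u d i (tone u 2)) \<nu>)"
      using sig_sig[OF len[OF w]] tact_tone[OF rm fu fin[OF w] len[OF w]]
      by (simp add: emb_tone emb_zero tact_zero sig_def)
  next
    fix k w assume "1 \<le> k \<and> k + 1 < d" and w: "w \<in> ?W"
    then show "sig k (sig (k + 1) (sig k w)) = sig (k + 1) (sig k (sig (k + 1) w))"
      using sig_braid[OF len[OF w]] by blast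
  next
    fix i j w assume "i \<in> {1..<d}" "j \<in> {1..<d}" "i + 2 \<le> j \<or> j + 2 \<le> i" and w: "w \<in> ?W"
    then show "sig i (sig j w) = sig j (sig i w)"
      using sig_commute[OF len[OF w]] by auto
  qed (simp_all add: sig_def)
qed

lemma qwp_rule_flip:
  assumes rm: "right_module m u va" and fu: "fsupp u"
  shows "qwp_rule u va d \<mu> (\<lambda>_. 0) (tone u 2) sig"
  unfolding qwp_rule_def
proof (intro ballI conjI impI)
  fix i \<nu> assume i: "i \<in> {1..<d}" and "\<nu> \<in> orbit d \<mu>"
  then have len: "length \<nu> = d"
    by (simp add: length_orbit)
  show "sig i (delta \<nu>) = delta (swp i \<nu>)"
    using i len by (simp add: sig_delta)
  then show "sig i (delta \<nu>) = (\<lambda>\<rho>. tact va (delta (swp i \<nu>)) (emb u d i (tone u 2)) \<rho>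
      + tact va (delta \<nu>) (emb u d i (\<lambda>_. 0)) \<rho>)"
    using i len tact_tone[OF rm fu finite_supp_delta length_supp_delta[of "swp i \<nu>" d]]
    by (simp add: emb_tone emb_zero tact_zero)
qed

lemma extends_to_qwp_module_flip:
  assumes "right_module m u va" "fsupp u"
  shows "extends_to_qwp_module u va d \<mu> (\<lambda>_. 0) (tone u 2)"
  unfolding extends_to_qwp_module_def
  using qwp_module_on_flip[OF assms] qwp_rule_flip[OF assms] by blast

theorem proposition7p3:
  fixes m :: "'x \<Rightarrow> 'x \<Rightarrow> 'x \<Rightarrow> 'k::comm_ring_1"
    and u :: "'x \<Rightarrow> 'k"
    and S R :: "'x list \<Rightarrow> 'k"
    and va :: "'i::linorder \<Rightarrow> 'x \<Rightarrow> 'i \<Rightarrow> 'k"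
    and d :: nat and \<mu> :: "'i list"
  assumes "free_algebra m u"
    and "qwp_flip_conditions m u S R"
    and "2 \<le> d"
    and "right_module m u va"
    and "length \<mu> = d" and "sorted_wrt (<) \<mu>"
  shows "((\<exists>\<epsilon> :: 'x \<Rightarrow> 'k. alg_hom_to_K m u \<epsilon> \<and>
              (\<forall>i x. va i x = (\<lambda>j. \<epsilon> x * delta i j)) \<and>
              (\<exists>r :: 'k. r * r = eps2 \<epsilon> S * r + eps2 \<epsilon> R))
           \<longrightarrow> extends_to_qwp_module u va d \<mu> S R)
       \<and> ((S = (\<lambda>_. 0) \<and> R = tone u 2) \<longrightarrow> extends_to_qwp_module u va d \<mu> S R)"
proof (intro conjI impI)
  assume "\<exists>\<epsilon> :: 'x \<Rightarrow> 'k. alg_hom_to_K m u \<epsilon> \<and> (\<forall>i x. va i x = (\<lambda>j. \<epsilon> x * delta i j)) \<and>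
      (\<exists>r :: 'k. r * r = eps2 \<epsilon> S * r + eps2 \<epsilon> R)"
  then obtain \<epsilon> :: "'x \<Rightarrow> 'k" where "\<forall>i x. va i x = (\<lambda>j. \<epsilon> x * delta i j)"
    by blast
  moreover have "distinct \<mu>"
    using assms(6) strict_sorted_iff by blast
  ultimately show "extends_to_qwp_module u va d \<mu> S R"
    using assms(5) by (intro extends_to_qwp_module_counit)
next
  assume "S = (\<lambda>_. 0) \<and> R = tone u 2"
  moreover have "fsupp u"
    using assms(1) by (simp add: free_algebra_def)
  ultimately show "extends_to_qwp_module u va d \<mu> S R"
    using extends_to_qwp_module_flip[OF assms(4)] by blast
qed

end
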